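(* Let $m\ge 2$, and let $C_1,\dots,C_m>0$, $\mu^c_1,\dots,\mu^c_m\ge 0$, $\theta^c_1,\dots,\theta^c_m\ge 0$ and $\lambda^c\ge 0$ be real numbers. Consider the system of ordinary differential equations $$\begin{aligned} x_1'(t)&=\mu^c_1\frac{C_1-x_1}{C_1}-\theta^c_1x_1-\mu^c_2\frac{x_1}{C_1}\frac{C_2-x_2}{C_2},\\ x_i'(t)&=\mu^c_i\frac{x_{i-1}}{C_{i-1}}\frac{C_i-x_i}{C_i}-\theta^c_ix_i-\mu^c_{i+1}\frac{x_i}{C_i}\frac{C_{i+1}-x_{i+1}}{C_{i+1}},\qquad 2\le i\le m-1,\\ x_m'(t)&=\mu^c_m\frac{x_{m-1}}{C_{m-1}}\frac{C_m-x_m}{C_m}-\theta^c_mx_m-\lambda^c, \end{aligned}$$ where $x_i=x_i(t)$. Let $(x_1^*,\dots,x_m^* )$ be an equilibrium point of this system (a point where all right-hand sides vanish) with $0\le x_i^*\le C_i$ for $i=1,\dots,m$. If $$\frac{\mu^c_2}{C_1}<\frac{\mu^c_1}{C_1}+\theta^c_1,\qquad \frac{\mu^c_i}{C_{i-1}}+\frac{\mu^c_{i+1}}{C_{i+1}}<\theta^c_i\ \ (2\le i\le m-1),\qquad \frac{\mu^c_m}{C_{m-1}}<\theta^c_m,$$ then $(x_1^*,\dots,x_m^* )$ is a stable equilibrium point (all eigenvalues of the Jacobian of the system at this point have negative real part).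
   Context: The system models an $m$-echelon inventory system in which the warehouses of each echelon are aggregated into one warehouse: $x_i(t)$ is the inventory level of echelon $i$, $C_i$ its maximum inventory level, $\mu^c_i$ its maximum supply rate, $\theta^c_i$ its average deterioration percentage per unit time, and $\lambda^c$ is the demand rate at the lowest echelon $m$. When $m=2$ there are no middle equations and no middle conditions. *)

theory Defs
  imports "HOL-Analysis.Analysis" "Jordan_Normal_Form.Char_Poly"
begin

text \<open>States are functions
  x :: nat => real, used at indices 1..m; the i-th component of the vector field
  (1 <= i <= m) is inv_rhs m C mu th lam x i.\<close>

definition inv_rhs ::
  "nat \<Rightarrow> (nat \<Rightarrow> real) \<Rightarrow> (nat \<Rightarrow> real) \<Rightarrow> (nat \<Rightarrow> real) \<Rightarrow> real \<Rightarrow> (nat \<Rightarrow> real) \<Rightarrow> nat \<Rightarrow> real"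
where
  "inv_rhs m C mu th lam x i =
     (if i = 1 then
        mu 1 * ((C 1 - x 1) / C 1) - th 1 * x 1 - mu 2 * (x 1 / C 1) * ((C 2 - x 2) / C 2)
      else if i = m then
        mu m * (x (m - 1) / C (m - 1)) * ((C m - x m) / C m) - th m * x m - lam
      else
        mu i * (x (i - 1) / C (i - 1)) * ((C i - x i) / C i) - th i * x i
          - mu (i + 1) * (x i / C i) * ((C (i + 1) - x (i + 1)) / C (i + 1)))"

text \<open>Jacobian at the point x: the m x m matrix whose (i,j) entry (0-based) is the
  partial derivative of component i+1 with respect to the variable x_(j+1).\<close>

definition inv_jacobian ::
  "nat \<Rightarrow> (nat \<Rightarrow> real) \<Rightarrow> (nat \<Rightarrow> real) \<Rightarrow> (nat \<Rightarrow> real) \<Rightarrow> real \<Rightarrow> (nat \<Rightarrow> real) \<Rightarrow> real mat"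
where
  "inv_jacobian m C mu th lam x =
     mat m m (\<lambda>(i, j). deriv (\<lambda>s. inv_rhs m C mu th lam (x((j + 1) := s)) (i + 1)) (x (j + 1)))"

definition stable_point ::
  "nat \<Rightarrow> (nat \<Rightarrow> real) \<Rightarrow> (nat \<Rightarrow> real) \<Rightarrow> (nat \<Rightarrow> real) \<Rightarrow> real \<Rightarrow> (nat \<Rightarrow> real) \<Rightarrow> bool"
where
  "stable_point m C mu th lam x =
     (\<forall>k. eigenvalue (map_mat complex_of_real (inv_jacobian m C mu th lam x)) k \<longrightarrow> Re k < 0)"

end

theory Submission
  imports Defs
begin

text \<open>At every point of the box \<open>0 \<le> x\<^sub>i \<le> C\<^sub>i\<close> the Jacobian is a Metzler matrix: its
  off-diagonal entries are nonnegative. Since the flows between adjacent echelons cancel in the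
  total inventory, its \<open>q\<close>-th column sums to \<open>-\<theta>\<^sub>q\<close> (minus \<open>\<mu>\<^sub>1/C\<^sub>1\<close> for \<open>q = 1\<close>), which
  the hypotheses make negative. Hence every column Gershgorin disc lies in the open left
  half-plane.\<close>

lemma eigenvalue_in_Gershgorin_disc:
  fixes A :: "'a :: real_normed_field mat"
  assumes A: "A \<in> carrier_mat n n" and ev: "eigenvalue A k"
  shows "\<exists>i<n. norm (k - A $$ (i, i)) \<le> (\<Sum>j\<in>{0..<n} - {i}. norm (A $$ (i, j)))"
proof -
  obtain v where v: "v \<in> carrier_vec n" "v \<noteq> 0\<^sub>v n" "A *\<^sub>v v = k \<cdot>\<^sub>v v"
    using ev A unfolding eigenvalue_def eigenvector_def by auto
  have "n > 0"
    using v(1,2) by (intro Nat.gr0I) auto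
  then obtain i where i: "i < n" and largest: "\<And>j. j < n \<Longrightarrow> norm (v $ j) \<le> norm (v $ i)"
  proof -
    let ?norms = "(\<lambda>j. norm (v $ j)) ` {..<n}"
    have "Max ?norms \<in> ?norms"
      using \<open>n > 0\<close> by (intro Max_in) auto
    then obtain i where "i < n" "norm (v $ i) = Max ?norms"
      by auto
    then show thesis
      by (intro that) auto
  qed
  have "norm (v $ i) > 0"
  proof (rule ccontr)
    assume "\<not> norm (v $ i) > 0"
    then have "v = 0\<^sub>v n"
      using v(1) largest by (intro eq_vecI) (auto intro: antisym)
    with v(2) show False by simp
  qed
  have "(k - A $$ (i, i)) * v $ i = (\<Sum>j\<in>{0..<n} - {i}. A $$ (i, j) * v $ j)"
  proof -
    have "k * v $ i = (\<Sum>j\<in>{0..<n}. A $$ (i, j) * v $ j)"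
      using arg_cong[OF v(3), of "\<lambda>w. w $ i"] A v(1) i by (simp add: scalar_prod_def)
    also have "\<dots> = A $$ (i, i) * v $ i + (\<Sum>j\<in>{0..<n} - {i}. A $$ (i, j) * v $ j)"
      using i by (subst sum.remove[of _ i]) auto
    finally show ?thesis by (simp add: algebra_simps)
  qed
  then have "norm (k - A $$ (i, i)) * norm (v $ i) = norm (\<Sum>j\<in>{0..<n} - {i}. A $$ (i, j) * v $ j)"
    by (metis norm_mult)
  also have "\<dots> \<le> (\<Sum>j\<in>{0..<n} - {i}. norm (A $$ (i, j)) * norm (v $ j))"
    by (rule order_trans[OF norm_sum]) (simp add: norm_mult)
  also have "\<dots> \<le> (\<Sum>j\<in>{0..<n} - {i}. norm (A $$ (i, j))) * norm (v $ i)"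
    unfolding sum_distrib_right by (rule sum_mono) (auto intro: mult_left_mono largest)
  finally show ?thesis
    using i \<open>norm (v $ i) > 0\<close> by auto
qed

lemma eigenvalue_in_column_Gershgorin_disc:
  fixes A :: "'a :: real_normed_field mat"
  assumes A: "A \<in> carrier_mat n n" and ev: "eigenvalue A k"
  shows "\<exists>j<n. norm (k - A $$ (j, j)) \<le> (\<Sum>i\<in>{0..<n} - {j}. norm (A $$ (i, j)))"
proof -
  have At: "transpose_mat A \<in> carrier_mat n n"
    using A by simp
  have "eigenvalue (transpose_mat A) k"
    using ev
    by (simp add: eigenvalue_root_char_poly[OF A] eigenvalue_root_char_poly[OF At]
        char_poly_transpose_mat[OF A])
  from eigenvalue_in_Gershgorin_disc[OF At this] show ?thesis
    using A by auto
qed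

lemma Re_eigenvalue_neg_if_Metzler_column_sums_neg:
  fixes A :: "real mat"
  assumes A: "A \<in> carrier_mat n n"
    and off_diag_nonneg: "\<And>i j. i < n \<Longrightarrow> j < n \<Longrightarrow> i \<noteq> j \<Longrightarrow> 0 \<le> A $$ (i, j)"
    and column_sum_neg: "\<And>j. j < n \<Longrightarrow> (\<Sum>i<n. A $$ (i, j)) < 0"
    and ev: "eigenvalue (map_mat complex_of_real A) k"
  shows "Re k < 0"
proof -
  have "map_mat complex_of_real A \<in> carrier_mat n n"
    using A by simp
  from eigenvalue_in_column_Gershgorin_disc[OF this ev] obtain j where j: "j < n"
    and disc: "cmod (k - of_real (A $$ (j, j))) \<le> (\<Sum>i\<in>{0..<n} - {j}. cmod (of_real (A $$ (i, j))))"
    using A by auto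
  have "(\<Sum>i\<in>{0..<n} - {j}. cmod (of_real (A $$ (i, j)))) = (\<Sum>i\<in>{0..<n} - {j}. A $$ (i, j))"
    using off_diag_nonneg j by (intro sum.cong) auto
  also have "\<dots> = (\<Sum>i<n. A $$ (i, j)) - A $$ (j, j)"
    using j by (simp add: sum_diff1 atLeast0LessThan)
  finally have "Re k - A $$ (j, j) \<le> (\<Sum>i<n. A $$ (i, j)) - A $$ (j, j)"
    using disc complex_Re_le_cmod[of "k - of_real (A $$ (j, j))"] by simp
  with column_sum_neg[OF j] show ?thesis
    by simp
qed

definition inv_jacobian_entry ::
  "nat \<Rightarrow> (nat \<Rightarrow> real) \<Rightarrow> (nat \<Rightarrow> real) \<Rightarrow> (nat \<Rightarrow> real) \<Rightarrow> (nat \<Rightarrow> real) \<Rightarrow> nat \<Rightarrow> nat \<Rightarrow> real"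
where
  "inv_jacobian_entry m C mu th x p q =
     (if q = p then
        - (if p = 1 then mu 1 / C 1 else mu p * x (p - 1) / (C (p - 1) * C p)) - th p
        - (if p = m then 0 else mu (p + 1) / C p * ((C (p + 1) - x (p + 1)) / C (p + 1)))
      else if q = p + 1 then mu (p + 1) * x p / (C p * C (p + 1))
      else if q + 1 = p then mu p / C (p - 1) * ((C p - x p) / C p)
      else 0)"

lemma inv_rhs_affine:
  assumes "2 \<le> m" "p \<in> {1..m}" "q \<in> {1..m}"
  shows "inv_rhs m C mu th lam (x(q := s)) p
           = inv_jacobian_entry m C mu th x p q * s + inv_rhs m C mu th lam (x(q := 0)) p"
  using assms
  by (cases "p = 1"; cases "p = m"; cases "q = p"; cases "q = p + 1"; cases "q + 1 = p")
     (auto simp: inv_rhs_def inv_jacobian_entry_def algebra_simps divide_inverse numeral_2_eq_2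
           split: if_splits)

lemma inv_jacobian_nth:
  assumes "2 \<le> m" "i < m" "j < m"
  shows "inv_jacobian m C mu th lam x $$ (i, j) = inv_jacobian_entry m C mu th x (i + 1) (j + 1)"
proof -
  let ?a = "inv_jacobian_entry m C mu th x (i + 1) (j + 1)"
  let ?b = "inv_rhs m C mu th lam (x(j + 1 := 0)) (i + 1)"
  have "(\<lambda>s. inv_rhs m C mu th lam (x(j + 1 := s)) (i + 1)) = (\<lambda>s. ?a * s + ?b)"
    using assms by (intro ext inv_rhs_affine) auto
  moreover have "deriv (\<lambda>s. ?a * s + ?b) (x (j + 1)) = ?a"
    by (rule DERIV_imp_deriv) (auto intro!: derivative_eq_intros)
  ultimately show ?thesis
    using assms by (simp add: inv_jacobian_def)
qed

lemma inv_jacobian_entry_nonneg: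
  assumes pq: "p \<in> {1..m}" "q \<in> {1..m}" "p \<noteq> q"
    and "\<forall>i\<in>{1..m}. C i > 0" "\<forall>i\<in>{1..m}. mu i \<ge> 0" "\<forall>i\<in>{1..m}. 0 \<le> x i \<and> x i \<le> C i"
  shows "0 \<le> inv_jacobian_entry m C mu th x p q"
proof -
  have "C p > 0" "C q > 0" "mu p \<ge> 0" "mu q \<ge> 0" "0 \<le> x p" "x p \<le> C p"
    using assms by auto
  then have "0 \<le> mu q * x p / (C p * C q)" "0 \<le> mu p / C q * ((C p - x p) / C p)"
    by simp_all
  then show ?thesis
    using pq by (auto simp: inv_jacobian_entry_def)
qed

lemma inv_jacobian_column_sum:
  assumes "2 \<le> m" "q \<in> {1..m}"
  shows "(\<Sum>p=1..m. inv_jacobian_entry m C mu th x p q) = - th q - (if q = 1 then mu 1 / C 1 else 0)"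
proof -
  have "(\<Sum>p=1..m. inv_jacobian_entry m C mu th x p q)
          = (\<Sum>p\<in>{1..m} \<inter> {q - 1, q, q + 1}. inv_jacobian_entry m C mu th x p q)"
    by (rule sum.mono_neutral_right) (auto simp: inv_jacobian_entry_def)
  also have "\<dots> = - th q - (if q = 1 then mu 1 / C 1 else 0)"
  proof -
    consider "q = 1" | "q = m" | "1 < q" "q < m"
      using assms by force
    then show ?thesis
    proof cases
      case 1
      then have "{1..m} \<inter> {q - 1, q, q + 1} = {1, 2}"
        using assms by auto
      with 1 assms show ?thesis by (simp add: inv_jacobian_entry_def numeral_2_eq_2)
    next
      case 2
      then have "{1..m} \<inter> {q - 1, q, q + 1} = {m - 1, m}"
        using assms by auto
      moreover have "m \<noteq> 1" "m - 1 \<noteq> m"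
        using assms by simp_all
      ultimately show ?thesis
        using 2 by (simp add: inv_jacobian_entry_def)
    next
      case 3
      then have "{1..m} \<inter> {q - 1, q, q + 1} = {q - 1, q, q + 1}"
        by auto
      moreover have "q - 1 \<notin> {q, q + 1}" "q \<noteq> q + 1" "q - 1 + 1 = q" "q \<noteq> 1"
        using 3 by auto
      ultimately show ?thesis
        using 3 by (simp add: inv_jacobian_entry_def)
    qed
  qed
  finally show ?thesis .
qed

lemma inv_jacobian_column_sum_neg:
  assumes m: "2 \<le> m" and q: "q \<in> {1..m}"
    and C_pos: "\<forall>i\<in>{1..m}. C i > 0" and mu_nonneg: "\<forall>i\<in>{1..m}. mu i \<ge> 0"
    and first: "mu 2 / C 1 < mu 1 / C 1 + th 1"
    and middle: "\<forall>i\<in>{2..m - 1}. mu i / C (i - 1) + mu (i + 1) / C (i + 1) < th i"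
    and last: "mu m / C (m - 1) < th m"
  shows "(\<Sum>p=1..m. inv_jacobian_entry m C mu th x p q) < 0"
proof -
  have "th q + (if q = 1 then mu 1 / C 1 else 0) > 0"
  proof -
    consider "q = 1" | "q = m" | "q \<in> {2..m - 1}"
      using q by force
    then show ?thesis
    proof cases
      case 1
      have "C 1 > 0" "mu 2 \<ge> 0"
        using C_pos mu_nonneg m by auto
      then have "mu 2 / C 1 \<ge> 0"
        by simp
      with 1 first show ?thesis
        by simp
    next
      case 2
      have "C (m - 1) > 0" "mu m \<ge> 0"
        using C_pos mu_nonneg m by auto
      then have "mu m / C (m - 1) \<ge> 0"
        by simp
      with 2 m last show ?thesis
        by simp
    next
      case 3
      then have "q - 1 \<in> {1..m}" "q \<in> {1..m}" "q + 1 \<in> {1..m}"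
        by auto
      then have "C (q - 1) > 0" "C (q + 1) > 0" "mu q \<ge> 0" "mu (q + 1) \<ge> 0"
        using C_pos mu_nonneg by blast+
      then have "mu q / C (q - 1) \<ge> 0" "mu (q + 1) / C (q + 1) \<ge> 0"
        by simp_all
      moreover have "mu q / C (q - 1) + mu (q + 1) / C (q + 1) < th q"
        using middle 3 by blast
      moreover have "q \<noteq> 1"
        using 3 by simp
      ultimately show ?thesis
        by simp
    qed
  qed
  then show ?thesis
    using inv_jacobian_column_sum[OF m q] by simp
qed

theorem proposition6:
  fixes m :: nat and C mu th :: "nat \<Rightarrow> real" and lam :: real and xs :: "nat \<Rightarrow> real"
  assumes "m \<ge> 2"
    and "\<forall>i\<in>{1..m}. C i > 0"
    and "\<forall>i\<in>{1..m}. mu i \<ge> 0"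
    and "\<forall>i\<in>{1..m}. th i \<ge> 0"
    and "lam \<ge> 0"
    and "\<forall>i\<in>{1..m}. inv_rhs m C mu th lam xs i = 0"
    and "\<forall>i\<in>{1..m}. 0 \<le> xs i \<and> xs i \<le> C i"
    and "mu 2 / C 1 < mu 1 / C 1 + th 1"
    and "\<forall>i\<in>{2..m - 1}. mu i / C (i - 1) + mu (i + 1) / C (i + 1) < th i"
    and "mu m / C (m - 1) < th m"
  shows "stable_point m C mu th lam xs"
proof -
  let ?J = "inv_jacobian m C mu th lam xs"
  have carrier: "?J \<in> carrier_mat m m"
    by (simp add: inv_jacobian_def)
  have off_diag_nonneg: "0 \<le> ?J $$ (i, j)" if "i < m" "j < m" "i \<noteq> j" for i j
    using that assms(1-3,7) by (simp add: inv_jacobian_nth inv_jacobian_entry_nonneg)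
  have column_sum_neg: "(\<Sum>i<m. ?J $$ (i, j)) < 0" if "j < m" for j
  proof -
    have "(\<Sum>i<m. ?J $$ (i, j)) = (\<Sum>p=1..m. inv_jacobian_entry m C mu th xs p (j + 1))"
      using that assms(1) by (simp add: inv_jacobian_nth sum.atLeast1_atMost_eq)
    also have "\<dots> < 0"
      using that assms(1-3,8-10) by (intro inv_jacobian_column_sum_neg) auto
    finally show ?thesis .
  qed
  show ?thesis
    unfolding stable_point_def
    using Re_eigenvalue_neg_if_Metzler_column_sums_neg[OF carrier off_diag_nonneg column_sum_neg]
    by blast
qed

end
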